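(* For every positive integer $k$, the function $f(x)=\frac{4}{15}\cdot\frac{30kx+45k+4}{(x+1)^2(15k-8x-4)}$ on $(-1,\tfrac{15k-4}{8})$ equals $\mathrm{Vol}(\sigma_0^\vee((x,1,0)))$ and its derivative has a unique zero in $[-1,\tfrac{15k-4}{8}]$, namely $x_0=\frac{225k^2+(15k+4)\sqrt{225k^2+600k+144}-600k-48}{480k}$. Moreover $x_0$ is irrational for every positive integer $k\ne3$.
   Context: Here $\sigma_0=\mathrm{pos}((2,1,5),(3k-2,1,-3),(-2,1,-3),(-1,1,0))\subset\mathbb{R}^3$, $\sigma_0^\vee$ its dual cone, $\sigma_0^\vee(w)=\{m\in\sigma_0^\vee:\langle m,w\rangle\le1\}$, and $\mathrm{Vol}$ denotes normalised lattice volume with respect to $\mathbb{Z}^3$ (i.e. $3!$ times Lebesgue volume). *)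

theory Defs
  imports "HOL-Analysis.Analysis"
begin

definition pos :: "(real^3) set \<Rightarrow> (real^3) set" where
  "pos S = {u. \<exists>c. (\<forall>v\<in>S. 0 \<le> c v) \<and> u = (\<Sum>v\<in>S. c v *\<^sub>R v)}"

definition dual_cone :: "(real^3) set \<Rightarrow> (real^3) set" where
  "dual_cone \<sigma> = {m. \<forall>u\<in>\<sigma>. 0 \<le> inner m u}"

definition dual_trunc :: "(real^3) set \<Rightarrow> real^3 \<Rightarrow> (real^3) set" where
  "dual_trunc \<sigma> w = {m \<in> dual_cone \<sigma>. inner m w \<le> 1}"

definition sigma0 :: "nat \<Rightarrow> (real^3) set" where
  "sigma0 k = pos {vector [2, 1, 5], vector [3 * real k - 2, 1, -3],
                   vector [-2, 1, -3], vector [-1, 1, 0]}"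

text \<open>Normalised lattice volume w.r.t. Z^3: 3! times Lebesgue volume.\<close>
definition Vol :: "(real^3) set \<Rightarrow> real" where
  "Vol S = 6 * measure lebesgue S"

definition fk :: "nat \<Rightarrow> real \<Rightarrow> real" where
  "fk k x = 4/15 * (30 * real k * x + 45 * real k + 4) /
             ((x + 1)^2 * (15 * real k - 8 * x - 4))"

definition x0 :: "nat \<Rightarrow> real" where
  "x0 k = (225 * (real k)^2 + (15 * real k + 4) * sqrt (225 * (real k)^2 + 600 * real k + 144)
           - 600 * real k - 48) / (480 * real k)"

end

theory Submission
  imports Defs
begin

text \<open>
  For \<open>w = (x, 1, 0)\<close> the set \<open>\<sigma>\<^sub>0\<^sup>\<or>(w)\<close> is cut out by \<open>\<langle>m, v\<rangle> \<ge> 0\<close> for the four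
  generators \<open>v\<close> of \<open>\<sigma>\<^sub>0\<close> and by \<open>\<langle>m, w\<rangle> \<le> 1\<close>.  The plane \<open>\<langle>m, (14,-5,15)\<rangle> = 0\<close>, spanned by two rays of
  the dual cone, cuts it into two simplicial cones; in each half one pair of facet inequalities
  is implied by the others, so each half is a tetrahedron with apex \<open>0\<close> whose volume is a
  determinant.  Their sum is \<open>f\<^sub>k\<close>.

  The derivative of \<open>f\<^sub>k\<close> is \<open>(x + 1)\<close> times a quadratic over a positive denominator; the
  quadratic has the roots \<open>x\<^sub>0\<close> and a second root below \<open>-1\<close>.  At both endpoints \<open>f\<^sub>k\<close> has a pole,
  so it is not differentiable there.  Finally \<open>x\<^sub>0\<close> is rational only if \<open>225k\<^sup>2 + 600k + 144\<close> is a
  perfect square; it lies strictly between \<open>(15k + 4)\<^sup>2\<close> and \<open>(15k + 20)\<^sup>2\<close>, and checking the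
  fifteen squares in between leaves only \<open>k = 3\<close>.
\<close>

section \<open>Volumes of truncated simplicial cones\<close>

lemma std_simplex_cart:
  "convex hull (insert 0 Basis) = {\<mu> :: real^'n. (\<forall>i. 0 \<le> \<mu>$i) \<and> (\<Sum>i\<in>UNIV. \<mu>$i) \<le> 1}"
proof -
  have "(\<Sum>b\<in>Basis. \<mu> \<bullet> b) = (\<Sum>i\<in>UNIV. \<mu>$i)" for \<mu> :: "real^'n"
  proof -
    have "Basis = range (\<lambda>i. axis i (1::real) :: real^'n)"
      by (auto simp: Basis_vec_def)
    moreover have "inj (\<lambda>i. axis i (1::real) :: real^'n)"
      by (auto simp: inj_on_def axis_eq_axis)
    ultimately have "(\<Sum>b\<in>Basis. \<mu> \<bullet> b) = (\<Sum>i\<in>UNIV. \<mu> \<bullet> axis i 1)"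
      by (metis (no_types, lifting) sum.reindex_cong)
    then show ?thesis
      by (simp add: inner_axis)
  qed
  then show ?thesis
    unfolding std_simplex by (auto simp: Basis_vec_def inner_axis)
qed

lemma truncated_simplicial_cone_eq_image_std_simplex:
  fixes A U :: "real^'n^'n" and w :: "real^'n"
  assumes biorth: "\<And>i j. i \<noteq> j \<Longrightarrow> inner (A$i) (U$j) = 0"
    and pos: "\<And>i. 0 < inner (A$i) (U$i)"
    and level: "\<And>i. inner (A$i) w = 1"
  shows "{m. (\<forall>i. 0 \<le> inner m (U$i)) \<and> inner m w \<le> 1}
           = (\<lambda>\<mu>. transpose A *v \<mu>) ` (convex hull (insert 0 Basis))"
proof -
  have AU: "A *v (U$j) = inner (A$j) (U$j) *\<^sub>R axis j 1" for j
    using biorth by (auto simp: vec_eq_iff matrix_vector_mul_component axis_def)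
  have Aw: "inner \<mu> (A *v w) = (\<Sum>i\<in>UNIV. \<mu>$i)" for \<mu>
    using level by (simp add: inner_vec_def matrix_vector_mul_component)
  have "0 \<le> \<mu>$i * inner (A$i) (U$i) \<longleftrightarrow> 0 \<le> \<mu>$i" for \<mu> i
    using pos[of i] by (simp add: zero_le_mult_iff)
  then have "transpose A *v \<mu> \<in> {m. (\<forall>i. 0 \<le> inner m (U$i)) \<and> inner m w \<le> 1}
          \<longleftrightarrow> \<mu> \<in> convex hull (insert 0 Basis)" for \<mu>
    unfolding std_simplex_cart by (simp add: dot_lmul_matrix AU Aw inner_axis mult.commute)
  moreover have "surj (\<lambda>\<mu>. transpose A *v \<mu>)"
  proof (rule linear_injective_imp_surjective)
    show "inj (\<lambda>\<mu>. transpose A *v \<mu>)"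
      unfolding linear_injective_0[OF matrix_vector_mul_linear]
    proof (intro allI impI)
      fix \<mu> :: "real^'n" assume \<mu>: "transpose A *v \<mu> = 0"
      have "\<mu>$j * inner (A$j) (U$j) = inner (transpose A *v \<mu>) (U$j)" for j
        by (simp add: dot_lmul_matrix AU inner_axis)
      then have "\<mu>$j = 0" for j
        using \<mu> pos[of j] by (metis inner_zero_left mult_eq_0_iff less_irrefl)
      then show "\<mu> = 0"
        by (simp add: vec_eq_iff)
    qed
  qed (auto simp del: transpose_matrix_vector)
  ultimately show ?thesis
    by (auto simp: image_iff) (metis surjD)
qed

lemma measure_truncated_simplicial_cone:
  fixes A U :: "real ^ ('n :: {finite, wellorder}) ^ ('n :: _)" and w :: "real ^ ('n :: _)"
  assumes "\<And>i j. i \<noteq> j \<Longrightarrow> inner (A$i) (U$j) = 0"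
    and "\<And>i. 0 < inner (A$i) (U$i)"
    and "\<And>i. inner (A$i) w = 1"
  shows "{m. (\<forall>i. 0 \<le> inner m (U$i)) \<and> inner m w \<le> 1} \<in> lmeasurable"
    and "measure lebesgue {m. (\<forall>i. 0 \<le> inner m (U$i)) \<and> inner m w \<le> 1}
           = \<bar>det A\<bar> / fact CARD('n)"
proof -
  define std where "std = convex hull (insert 0 (Basis :: (real ^ ('n::_)) set))"
  have T: "{m. (\<forall>i. 0 \<le> inner m (U$i)) \<and> inner m w \<le> 1} = (\<lambda>\<mu>. transpose A *v \<mu>) ` std"
    unfolding std_def using assms by (rule truncated_simplicial_cone_eq_image_std_simplex)
  have "compact std"
    unfolding std_def by (intro finite_imp_compact_convex_hull) auto
  then show "{m. (\<forall>i. 0 \<le> inner m (U$i)) \<and> inner m w \<le> 1} \<in> lmeasurable"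
    unfolding T by (intro lmeasurable_compact compact_continuous_image linear_continuous_on) auto
  have "measure lebesgue std = 1 / fact CARD('n)"
    using \<open>compact std\<close>
    by (subst measure_completion) (auto simp: std_def content_std_simplex dest: compact_imp_closed)
  then show "measure lebesgue {m. (\<forall>i. 0 \<le> inner m (U$i)) \<and> inner m w \<le> 1}
           = \<bar>det A\<bar> / fact CARD('n)"
    unfolding T using \<open>compact std\<close>
    by (subst measure_lebesgue_linear_transformation)
       (auto simp: det_transpose intro: compact_imp_bounded dest: compact_imp_closed)
qed

lemma measure_truncated_simplicial_cone_3:
  fixes a b c ua ub uc w :: "real^3"
  assumes "0 < inner a ua" "inner b ua = 0" "inner c ua = 0"
    and "inner a ub = 0" "0 < inner b ub" "inner c ub = 0"
    and "inner a uc = 0" "inner b uc = 0" "0 < inner c uc"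
    and "inner a w = 1" "inner b w = 1" "inner c w = 1"
  shows "{m. 0 \<le> inner m ua \<and> 0 \<le> inner m ub \<and> 0 \<le> inner m uc \<and> inner m w \<le> 1} \<in> lmeasurable"
    and "measure lebesgue {m. 0 \<le> inner m ua \<and> 0 \<le> inner m ub \<and> 0 \<le> inner m uc \<and> inner m w \<le> 1}
           = \<bar>det (vector [a, b, c] :: real^3^3)\<bar> / 6"
proof -
  define A U where "A = (vector [a, b, c] :: real^3^3)" and "U = (vector [ua, ub, uc] :: real^3^3)"
  have "{m. (\<forall>i. 0 \<le> inner m (U$i)) \<and> inner m w \<le> 1}
          = {m. 0 \<le> inner m ua \<and> 0 \<le> inner m ub \<and> 0 \<le> inner m uc \<and> inner m w \<le> 1}"
    by (auto simp: U_def forall_3 vector_3)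
  moreover have "i \<noteq> j \<Longrightarrow> inner (A$i) (U$j) = 0" for i j
    using assms exhaust_3[of i] exhaust_3[of j] by (auto simp: A_def U_def vector_3)
  moreover have "0 < inner (A$i) (U$i)" "inner (A$i) w = 1" for i
    using assms exhaust_3[of i] by (auto simp: A_def U_def vector_3)
  ultimately show "{m. 0 \<le> inner m ua \<and> 0 \<le> inner m ub \<and> 0 \<le> inner m uc \<and> inner m w \<le> 1} \<in> lmeasurable"
    and "measure lebesgue {m. 0 \<le> inner m ua \<and> 0 \<le> inner m ub \<and> 0 \<le> inner m uc \<and> inner m w \<le> 1}
           = \<bar>det (vector [a, b, c] :: real^3^3)\<bar> / 6"
    using measure_truncated_simplicial_cone[where A=A and U=U and w=w] by (auto simp: A_def fact_numeral)
qed

lemma measure_Un_opposite_halfspaces: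
  fixes n :: "'a::euclidean_space"
  assumes "S \<in> lmeasurable" "T \<in> lmeasurable" "n \<noteq> 0"
    and "S \<subseteq> {m. inner n m \<le> 0}" "T \<subseteq> {m. 0 \<le> inner n m}"
  shows "measure lebesgue (S \<union> T) = measure lebesgue S + measure lebesgue T"
proof -
  have "S \<inter> T \<subseteq> {m. inner n m = 0}"
    using assms(4,5) by fastforce
  then have "negligible (S \<inter> T)"
    using assms(3) by (intro negligible_subset[OF negligible_hyperplane[of n 0]]) auto
  then show ?thesis
    using measure_Un3[OF assms(1,2)] negligible_imp_measure0 by simp
qed

section \<open>The truncated dual cone of \<open>\<sigma>\<^sub>0\<close>\<close>

lemma dual_cone_pos:
  assumes "finite S"
  shows "dual_cone (pos S) = {m. \<forall>v\<in>S. 0 \<le> inner m v}"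
proof (intro set_eqI iffI)
  fix m assume m: "m \<in> dual_cone (pos S)"
  have "v \<in> pos S" if "v \<in> S" for v
    unfolding pos_def
    by (intro CollectI exI[of _ "\<lambda>u. if u = v then 1 else 0"])
       (simp add: if_distrib[of "\<lambda>c. c *\<^sub>R _"] assms that cong: if_cong)
  then show "m \<in> {m. \<forall>v\<in>S. 0 \<le> inner m v}"
    using m by (auto simp: dual_cone_def)
next
  fix m assume "m \<in> {m. \<forall>v\<in>S. 0 \<le> inner m v}"
  then show "m \<in> dual_cone (pos S)"
    unfolding dual_cone_def pos_def by (auto simp: inner_sum_right intro!: sum_nonneg)
qed

lemma inner_vector_3: "inner m (vector [b1, b2, b3] :: real^3) = m$1 * b1 + m$2 * b2 + m$3 * b3"
  by (simp add: inner_vec_def sum_3)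

lemma dual_trunc_sigma0:
  "dual_trunc (sigma0 k) w =
     {m. 0 \<le> inner m (vector [2, 1, 5]) \<and> 0 \<le> inner m (vector [3 * real k - 2, 1, -3])
       \<and> 0 \<le> inner m (vector [-2, 1, -3]) \<and> 0 \<le> inner m (vector [-1, 1, 0]) \<and> inner m w \<le> 1}"
  unfolding dual_trunc_def sigma0_def by (subst dual_cone_pos) auto

lemma measure_dual_trunc_sigma0_piece_1:
  fixes K x :: real
  assumes "0 \<le> K" "-1 < x" "8 * x < 15 * K - 4"
  defines "T \<equiv> {m :: real^3. 0 \<le> inner m (vector [3 * K - 2, 1, -3]) \<and> 0 \<le> inner m (vector [-14, 5, -15])
                 \<and> 0 \<le> inner m (vector [2, 1, 5]) \<and> inner m (vector [x, 1, 0]) \<le> 1}"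
  shows "T \<in> lmeasurable" and "measure lebesgue T = 4 * (15 * K + 4) / (45 * (x + 1) * (15 * K - 8 * x - 4))"
proof -
  define p q where "p = x + 1" and "q = 15 * K - 8 * x - 4"
  have pq: "0 < p" "0 < q"
    using assms by (auto simp: p_def q_def)
  \<comment> \<open>the points where the three edges of the cone meet the plane \<open>\<langle>m, (x, 1, 0)\<rangle> = 1\<close>\<close>
  define a where "a = (vector [1 / p, 1 / p, -3 / (5 * p)] :: real^3)"
  define b where "b = (vector [-8 / q, (15 * K - 4) / q, (4 - 3 * K) / q] :: real^3)"
  define c where "c = (vector [0, 1, 1/3] :: real^3)"
  note simps = a_def b_def c_def inner_vector_3 vector_3
  have "inner a (vector [3 * K - 2, 1, -3]) = (15 * K + 4) / (5 * p)"
    "inner b (vector [-14, 5, -15]) = 8 * (15 * K + 4) / q"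
    "inner c (vector [2, 1, 5]) = 8 / 3"
    using pq by (simp_all add: simps field_simps)
  then have "0 < inner a (vector [3 * K - 2, 1, -3])" "0 < inner b (vector [-14, 5, -15])"
    "0 < inner c (vector [2, 1, 5])"
    using assms pq by simp_all
  moreover have "inner b (vector [3 * K - 2, 1, -3]) = 0" "inner c (vector [3 * K - 2, 1, -3]) = 0"
    "inner a (vector [-14, 5, -15]) = 0" "inner c (vector [-14, 5, -15]) = 0"
    "inner a (vector [2, 1, 5]) = 0" "inner b (vector [2, 1, 5]) = 0"
    using pq by (simp_all add: simps field_simps)
  moreover have "inner a (vector [x, 1, 0]) = (x + 1) / p" "inner b (vector [x, 1, 0]) = (15 * K - 8 * x - 4) / q"
    "inner c (vector [x, 1, 0]) = 1"
    using pq by (simp_all add: simps field_simps)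
  then have "inner a (vector [x, 1, 0]) = 1" "inner b (vector [x, 1, 0]) = 1" "inner c (vector [x, 1, 0]) = 1"
    using pq by (simp_all add: p_def q_def)
  ultimately have "T \<in> lmeasurable \<and> measure lebesgue T = \<bar>det (vector [a, b, c] :: real^3^3)\<bar> / 6"
    unfolding T_def by (intro conjI measure_truncated_simplicial_cone_3) assumption+
  moreover have "\<bar>det (vector [a, b, c] :: real^3^3)\<bar> / 6 = 4 * (15 * K + 4) / (45 * p * q)"
    using assms pq by (simp add: det_3 simps field_simps)
  ultimately show "T \<in> lmeasurable" and "measure lebesgue T = 4 * (15 * K + 4) / (45 * (x + 1) * (15 * K - 8 * x - 4))"
    by (simp_all add: p_def q_def)
qed

lemma measure_dual_trunc_sigma0_piece_2:
  fixes x :: real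
  assumes "-1 < x"
  defines "T \<equiv> {m :: real^3. 0 \<le> inner m (vector [-2, 1, -3]) \<and> 0 \<le> inner m (vector [-1, 1, 0])
                 \<and> 0 \<le> inner m (vector [14, -5, 15]) \<and> inner m (vector [x, 1, 0]) \<le> 1}"
  shows "T \<in> lmeasurable" and "measure lebesgue T = 2 / (45 * (x + 1)^2)"
proof -
  define p where "p = x + 1"
  have p: "0 < p"
    using assms by (simp add: p_def)
  \<comment> \<open>the points where the three edges of the cone meet the plane \<open>\<langle>m, (x, 1, 0)\<rangle> = 1\<close>\<close>
  define a where "a = (vector [1 / p, 1 / p, -3 / (5 * p)] :: real^3)"
  define c where "c = (vector [0, 1, 1/3] :: real^3)"
  define d where "d = (vector [1 / p, 1 / p, -1 / (3 * p)] :: real^3)"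
  note simps = a_def c_def d_def inner_vector_3 vector_3
  have "inner a (vector [-2, 1, -3]) = 4 / (5 * p)" "inner c (vector [-1, 1, 0]) = 1"
    "inner d (vector [14, -5, 15]) = 4 / p"
    using p by (simp_all add: simps field_simps)
  then have "0 < inner a (vector [-2, 1, -3])" "0 < inner c (vector [-1, 1, 0])"
    "0 < inner d (vector [14, -5, 15])"
    using p by simp_all
  moreover have "inner c (vector [-2, 1, -3]) = 0" "inner d (vector [-2, 1, -3]) = 0"
    "inner a (vector [-1, 1, 0]) = 0" "inner d (vector [-1, 1, 0]) = 0"
    "inner a (vector [14, -5, 15]) = 0" "inner c (vector [14, -5, 15]) = 0"
    using p by (simp_all add: simps field_simps)
  moreover have "inner a (vector [x, 1, 0]) = (x + 1) / p" "inner c (vector [x, 1, 0]) = 1"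
    "inner d (vector [x, 1, 0]) = (x + 1) / p"
    using p by (simp_all add: simps field_simps)
  then have "inner a (vector [x, 1, 0]) = 1" "inner c (vector [x, 1, 0]) = 1" "inner d (vector [x, 1, 0]) = 1"
    using p by (simp_all add: p_def)
  ultimately have "T \<in> lmeasurable \<and> measure lebesgue T = \<bar>det (vector [a, c, d] :: real^3^3)\<bar> / 6"
    unfolding T_def by (intro conjI measure_truncated_simplicial_cone_3) assumption+
  moreover have "\<bar>det (vector [a, c, d] :: real^3^3)\<bar> / 6 = 2 / (45 * p^2)"
    using p by (simp add: det_3 simps field_simps power2_eq_square)
  ultimately show "T \<in> lmeasurable" and "measure lebesgue T = 2 / (45 * (x + 1)^2)"
    by (simp_all add: p_def)
qed

lemma dual_trunc_sigma0_split:
  fixes K x :: real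
  assumes "0 \<le> K"
  shows "{m :: real^3. 0 \<le> inner m (vector [2, 1, 5]) \<and> 0 \<le> inner m (vector [3 * K - 2, 1, -3])
           \<and> 0 \<le> inner m (vector [-2, 1, -3]) \<and> 0 \<le> inner m (vector [-1, 1, 0]) \<and> inner m (vector [x, 1, 0]) \<le> 1}
       = {m. 0 \<le> inner m (vector [3 * K - 2, 1, -3]) \<and> 0 \<le> inner m (vector [-14, 5, -15])
           \<and> 0 \<le> inner m (vector [2, 1, 5]) \<and> inner m (vector [x, 1, 0]) \<le> 1}
       \<union> {m. 0 \<le> inner m (vector [-2, 1, -3]) \<and> 0 \<le> inner m (vector [-1, 1, 0])
           \<and> 0 \<le> inner m (vector [14, -5, 15]) \<and> inner m (vector [x, 1, 0]) \<le> 1}"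
    (is "?P = ?T1 \<union> ?T2")
proof (intro set_eqI)
  fix m :: "real^3"
  define u1 u2 u3 u4 s where "u1 = inner m (vector [2, 1, 5])" and "u2 = inner m (vector [3 * K - 2, 1, -3])"
    and "u3 = inner m (vector [-2, 1, -3])" and "u4 = inner m (vector [-1, 1, 0])"
    and "s = inner m (vector [-14, 5, -15])"
  \<comment> \<open>on each side of \<open>s = 0\<close> the two dropped facet functionals are nonnegative
    combinations of the retained ones\<close>
  have "(15 * K + 4) * u3 = 4 * u2 + 3 * K * s" "8 * u4 = 3 * u1 + s"
    and n: "inner m (vector [14, -5, 15]) = - s"
    by (simp_all add: u1_def u2_def u3_def u4_def s_def inner_vector_3 algebra_simps)
  moreover have "0 \<le> s \<Longrightarrow> 0 \<le> K * s" "s \<le> 0 \<Longrightarrow> K * s \<le> 0"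
    using assms by (simp_all add: mult_nonneg_nonpos)
  moreover have "0 \<le> (15 * K + 4) * u3 \<longleftrightarrow> 0 \<le> u3"
    using assms by (simp add: zero_le_mult_iff)
  ultimately have iff: "(0 \<le> u1 \<and> 0 \<le> u2 \<and> 0 \<le> u3 \<and> 0 \<le> u4)
      \<longleftrightarrow> (0 \<le> u2 \<and> 0 \<le> s \<and> 0 \<le> u1) \<or> (0 \<le> u3 \<and> 0 \<le> u4 \<and> 0 \<le> - s)"
    by linarith
  show "m \<in> ?P \<longleftrightarrow> m \<in> ?T1 \<union> ?T2"
    unfolding mem_Collect_eq Un_iff n u1_def[symmetric] u2_def[symmetric] u3_def[symmetric]
      u4_def[symmetric] s_def[symmetric]
    using iff by auto
qed

lemma fk_eq_Vol_dual_trunc_sigma0: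
  assumes "-1 < x" "x < (15 * real k - 4) / 8"
  shows "fk k x = Vol (dual_trunc (sigma0 k) (vector [x, 1, 0]))"
proof -
  define K where "K = real k"
  define T1 where "T1 = {m :: real^3. 0 \<le> inner m (vector [3 * K - 2, 1, -3])
    \<and> 0 \<le> inner m (vector [-14, 5, -15]) \<and> 0 \<le> inner m (vector [2, 1, 5]) \<and> inner m (vector [x, 1, 0]) \<le> 1}"
  define T2 where "T2 = {m :: real^3. 0 \<le> inner m (vector [-2, 1, -3]) \<and> 0 \<le> inner m (vector [-1, 1, 0])
    \<and> 0 \<le> inner m (vector [14, -5, 15]) \<and> inner m (vector [x, 1, 0]) \<le> 1}"
  have K: "0 \<le> K" "8 * x < 15 * K - 4"
    using assms by (simp_all add: K_def)
  note T1 = measure_dual_trunc_sigma0_piece_1[OF K(1) assms(1) K(2), folded T1_def]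
  note T2 = measure_dual_trunc_sigma0_piece_2[OF assms(1), folded T2_def]
  have "dual_trunc (sigma0 k) (vector [x, 1, 0]) = T1 \<union> T2"
    unfolding dual_trunc_sigma0 T1_def T2_def K_def using dual_trunc_sigma0_split by simp
  moreover have "T1 \<subseteq> {m. inner (vector [14, -5, 15]) m \<le> 0}" "T2 \<subseteq> {m. 0 \<le> inner (vector [14, -5, 15]) m}"
    by (auto simp: T1_def T2_def inner_commute[of "vector _"] inner_vector_3)
  moreover have "vector [14, -5, 15] \<noteq> (0 :: real^3)"
    by (simp add: vec_eq_iff forall_3 vector_3)
  ultimately have "Vol (dual_trunc (sigma0 k) (vector [x, 1, 0])) = 6 * (measure lebesgue T1 + measure lebesgue T2)"
    unfolding Vol_def using T1(1) T2(1) by (simp add: measure_Un_opposite_halfspaces)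
  also have "\<dots> = fk k x"
  proof -
    define p q where "p = x + 1" and "q = 15 * K - 8 * x - 4"
    have "0 < p" "0 < q"
      using assms K by (simp_all add: p_def q_def)
    moreover have "fk k x = 4 / 15 * (2 * (15 * K + 4) * p + q) / (p^2 * q)"
      unfolding fk_def K_def[symmetric] p_def q_def by (simp add: algebra_simps)
    ultimately show ?thesis
      unfolding T1(2) T2(2) p_def[symmetric] q_def[symmetric] by (simp add: field_simps power2_eq_square)
  qed
  finally show ?thesis ..
qed

section \<open>The critical point\<close>

definition crit_poly :: "real \<Rightarrow> real \<Rightarrow> real" where
  "crit_poly K x = 480 * K * x^2 - (450 * K^2 - 1200 * K - 96) * x - (900 * K^2 - 480 * K - 64)"

lemma has_real_derivative_fk:
  assumes "-1 < x" "x < (15 * real k - 4) / 8"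
  shows "(fk k has_real_derivative
           4 / 15 * ((x + 1) * crit_poly (real k) x) / ((x + 1)^2 * (15 * real k - 8 * x - 4))^2) (at x)"
proof -
  define K where "K = real k"
  have "((\<lambda>x. 4 / 15 * (30 * K * x + 45 * K + 4)) has_real_derivative 8 * K) (at x)"
    by (auto intro!: derivative_eq_intros)
  moreover have "((\<lambda>x. (x + 1)^2 * (15 * K - 8 * x - 4)) has_real_derivative
                    2 * (x + 1) * (15 * K - 8 * x - 4) - 8 * (x + 1)^2) (at x)"
    by (auto intro!: derivative_eq_intros)
  moreover have "(x + 1)^2 * (15 * K - 8 * x - 4) \<noteq> 0"
    using assms by (simp add: K_def)
  ultimately have "(fk k has_real_derivative
      (8 * K * ((x + 1)^2 * (15 * K - 8 * x - 4))
       - 4 / 15 * (30 * K * x + 45 * K + 4) * (2 * (x + 1) * (15 * K - 8 * x - 4) - 8 * (x + 1)^2))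
      / (((x + 1)^2 * (15 * K - 8 * x - 4)) * ((x + 1)^2 * (15 * K - 8 * x - 4)))) (at x)"
    unfolding fk_def K_def by (rule DERIV_divide)
  also have "8 * K * ((x + 1)^2 * (15 * K - 8 * x - 4))
       - 4 / 15 * (30 * K * x + 45 * K + 4) * (2 * (x + 1) * (15 * K - 8 * x - 4) - 8 * (x + 1)^2)
      = 4 / 15 * ((x + 1) * crit_poly K x)"
    by (simp add: crit_poly_def algebra_simps power2_eq_square)
  finally show ?thesis
    by (simp only: K_def power2_eq_square[symmetric])
qed

lemma sqrt_discriminant_bounds:
  assumes "0 \<le> K"
  shows "15 * K + 4 \<le> sqrt (225 * K^2 + 600 * K + 144)" and "sqrt (225 * K^2 + 600 * K + 144) \<le> 15 * K + 20"
  using assms by (auto intro!: real_le_rsqrt real_le_lsqrt simp: power2_eq_square algebra_simps)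

lemma x0_bounds:
  assumes "1 \<le> k"
  shows "-1 < x0 k" and "x0 k < (15 * real k - 4) / 8"
proof -
  define K s where "K = real k" and "s = (15 * K + 4) * sqrt (225 * K^2 + 600 * K + 144)"
  have K: "1 \<le> K" "1 \<le> K * K"
    using assms mult_mono[of 1 K 1 K] by (simp_all add: K_def)
  have "(15 * K + 4) * (15 * K + 4) \<le> s" "s \<le> (15 * K + 4) * (15 * K + 20)"
    using sqrt_discriminant_bounds[of K] K unfolding s_def by (simp_all add: mult_left_mono)
  then have lower: "- (480 * K) < 225 * K^2 - 600 * K - 48 + s"
    and upper: "225 * K^2 - 600 * K - 48 + s < 60 * K * (15 * K - 4)"
    using K by (simp_all add: algebra_simps power2_eq_square)
  have x0: "x0 k = (225 * K^2 - 600 * K - 48 + s) / (480 * K)"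
    by (simp add: x0_def K_def s_def algebra_simps)
  show "-1 < x0 k"
    unfolding x0 using lower K by (simp add: pos_less_divide_eq)
  have "x0 k < 60 * K * (15 * K - 4) / (480 * K)"
    unfolding x0 using upper K by (intro divide_strict_right_mono) auto
  also have "\<dots> = (15 * real k - 4) / 8"
    using K by (simp add: K_def)
  finally show "x0 k < (15 * real k - 4) / 8" .
qed

lemma crit_poly_eq_0_iff:
  assumes "1 \<le> k" "-1 < x"
  shows "crit_poly (real k) x = 0 \<longleftrightarrow> x = x0 k"
proof -
  define K r where "K = real k" and "r = sqrt (225 * K^2 + 600 * K + 144)"
  define A B where "A = 225 * K^2 - 600 * K - 48" and "B = 15 * K + 4"
  define x1 where "x1 = (A - B * r) / (480 * K)"
  have K: "1 \<le> K" "1 \<le> K * K"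
    using assms mult_mono[of 1 K 1 K] by (simp_all add: K_def)
  have x0: "x0 k = (A + B * r) / (480 * K)"
    by (simp add: x0_def A_def B_def r_def K_def)
  have "r^2 = 225 * K^2 + 600 * K + 144"
    unfolding r_def using K by simp
  then have disc: "A^2 - B^2 * r^2 = - 480 * K * (900 * K^2 - 480 * K - 64)"
    unfolding A_def B_def by (simp only:) (simp add: algebra_simps power2_eq_square)
  have "480 * K * (x - x0 k) * (x - x1) = 480 * K * x^2 - 2 * A * x + (A^2 - B^2 * r^2) / (480 * K)"
    unfolding x0 x1_def using K by (simp add: field_simps power2_eq_square)
  also have "\<dots> = 480 * K * x^2 - 2 * A * x - (900 * K^2 - 480 * K - 64)"
    unfolding disc using K by simp
  also have "\<dots> = crit_poly K x"
    unfolding crit_poly_def A_def by (simp add: algebra_simps)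
  finally have factor: "crit_poly K x = 480 * K * (x - x0 k) * (x - x1)" ..
  have "B * B \<le> B * r"
    using sqrt_discriminant_bounds[of K] K by (simp add: B_def r_def mult_left_mono)
  then have "A - B * r < - (480 * K)"
    using K by (simp add: A_def B_def algebra_simps power2_eq_square)
  then have "x1 < -1"
    unfolding x1_def using K by (simp add: pos_divide_less_eq)
  then show ?thesis
    unfolding factor K_def[symmetric] using K assms(2) by auto
qed

lemma not_isCont_divide_at_pole:
  fixes p q :: "'a::{real_normed_field, perfect_space} \<Rightarrow> 'a"
  assumes "isCont p a" "isCont q a" "q a = 0" "p a \<noteq> 0" "\<forall>\<^sub>F x in at a. q x \<noteq> 0"
  shows "\<not> isCont (\<lambda>x. p x / q x) a"
proof
  assume "isCont (\<lambda>x. p x / q x) a"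
  then have "((\<lambda>x. q x * (p x / q x)) \<longlongrightarrow> q a * (p a / q a)) (at a)"
    using assms(2) unfolding isCont_def by (rule tendsto_mult[rotated])
  then have "(p \<longlongrightarrow> 0) (at a)"
    using assms(3,5) by (auto elim!: Lim_transform_eventually eventually_mono)
  moreover have "(p \<longlongrightarrow> p a) (at a)"
    using assms(1) by (simp add: isCont_def)
  ultimately show False
    using assms(4) tendsto_unique[OF at_neq_bot] by blast
qed

text \<open>Since \<open>x / 0 = 0\<close>, \<open>fk k\<close> vanishes at both poles; it is nonetheless discontinuous there.\<close>

lemma fk_not_isCont_at_poles:
  shows "\<not> isCont (fk k) (-1)" and "\<not> isCont (fk k) ((15 * real k - 4) / 8)"
proof -
  define K where "K = real k"
  define p q where "p x = 4 / 15 * (30 * K * x + 45 * K + 4)" and "q x = (x + 1)^2 * (15 * K - 8 * x - 4)"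
    for x :: real
  have fk: "fk k = (\<lambda>x. p x / q x)"
    by (simp add: fun_eq_iff fk_def p_def q_def K_def)
  have K: "0 \<le> K"
    by (simp add: K_def)
  have cont: "isCont p a" "isCont q a" for a
    unfolding p_def q_def by (auto intro!: continuous_intros)
  have q_eq_0: "q x = 0 \<longleftrightarrow> x = -1 \<or> x = (15 * K - 4) / 8" for x
    unfolding q_def by (auto simp: eq_divide_eq)
  have nonzero: "\<forall>\<^sub>F x in at a. q x \<noteq> 0" for a
    unfolding q_eq_0 de_Morgan_disj by (intro eventually_conj eventually_neq_at_within)
  have p_poles: "p (-1) = 4 / 15 * (15 * K + 4)" "p ((15 * K - 4) / 8) = (15 * K + 4)^2 / 15"
    by (simp_all add: p_def field_simps power2_eq_square)
  have "p (-1) \<noteq> 0" "p ((15 * K - 4) / 8) \<noteq> 0"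
    unfolding p_poles using K by simp_all
  then show "\<not> isCont (fk k) (-1)" and "\<not> isCont (fk k) ((15 * real k - 4) / 8)"
    unfolding fk K_def[symmetric] using cont nonzero
    by (intro not_isCont_divide_at_pole; simp add: q_eq_0)+
qed

section \<open>Irrationality of \<open>x\<^sub>0\<close>\<close>

lemma sqrt_of_nat_in_Rats_imp_square:
  assumes "sqrt (real M) \<in> \<rat>"
  obtains m where "M = m^2"
proof -
  from assms obtain p q :: nat where q: "q \<noteq> 0" and pq: "\<bar>sqrt (real M)\<bar> = p / q" and "coprime p q"
    by (rule Rats_abs_nat_div_natE)
  have "real p = sqrt (real M) * q"
    using pq q by (simp add: field_simps)
  then have "real (p^2) = real (M * q^2)"
    by (simp add: power_mult_distrib)
  then have eq: "p^2 = M * q^2"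
    by (simp only: of_nat_eq_iff)
  have "q^2 dvd p^2"
    using eq by simp
  moreover have "coprime (p^2) (q^2)"
    using \<open>coprime p q\<close> by simp
  ultimately have "q^2 = 1"
    using coprime_common_divisor_nat by (metis dvd_refl)
  then have "q = 1"
    by simp
  with eq show ?thesis
    using that[of p] by simp
qed

lemma discriminant_not_square:
  fixes k m :: nat
  assumes "1 \<le> k" "k \<noteq> 3"
  shows "225 * k^2 + 600 * k + 144 \<noteq> m^2"
proof
  assume eq: "225 * k^2 + 600 * k + 144 = m^2"
  have "(15 * k + 4)^2 < m^2" "m^2 < (15 * k + 20)^2"
    using eq assms by (simp_all add: power2_eq_square algebra_simps)
  then have "15 * k + 4 < m" "m < 15 * k + 20"
    by (simp_all add: power_less_imp_less_base)
  then obtain j where m: "m = 15 * k + j" and "j \<in> {5..19}"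
    by (intro that[of "m - 15 * k"]) auto
  moreover have "30 * k * j + j * j = 600 * k + 144"
    using eq unfolding m by (simp add: power2_eq_square algebra_simps)
  moreover have "{5..19} = {5, 6, 7, 8, 9, 10, 11, 12, 13, 14, 15, 16, 17, 18, 19 :: nat}"
    by code_simp
  ultimately show False
    using assms by auto presburger+
qed

lemma x0_not_Rats:
  assumes "1 \<le> k" "k \<noteq> 3"
  shows "x0 k \<notin> \<rat>"
proof
  assume "x0 k \<in> \<rat>"
  define K where "K = real k"
  have K: "0 < K"
    using assms by (simp add: K_def)
  have "480 * K * x0 k = 225 * K^2 - 600 * K - 48 + (15 * K + 4) * sqrt (225 * K^2 + 600 * K + 144)"
    using K by (simp add: x0_def K_def)
  then have "sqrt (225 * K^2 + 600 * K + 144) = (480 * K * x0 k - (225 * K^2 - 600 * K - 48)) / (15 * K + 4)"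
    using K by (simp add: eq_divide_eq mult.commute)
  also have "\<dots> \<in> \<rat>"
    using \<open>x0 k \<in> \<rat>\<close> unfolding K_def by (intro Rats_divide Rats_diff Rats_mult Rats_add) simp_all
  finally have "sqrt (real (225 * k^2 + 600 * k + 144)) \<in> \<rat>"
    by (simp add: K_def)
  then obtain m where "225 * k^2 + 600 * k + 144 = m^2"
    by (rule sqrt_of_nat_in_Rats_imp_square)
  with discriminant_not_square[OF assms] show False
    by blast
qed

theorem mainTheorem13:
  fixes k :: nat
  assumes "k \<ge> 1"
  shows "(\<forall>x \<in> {-1<..<(15 * real k - 4) / 8}.
            fk k x = Vol (dual_trunc (sigma0 k) (vector [x, 1, 0])))
       \<and> x0 k \<in> {-1..(15 * real k - 4) / 8}
       \<and> (\<forall>x \<in> {-1..(15 * real k - 4) / 8}.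
            (fk k has_real_derivative 0) (at x) \<longleftrightarrow> x = x0 k)
       \<and> (k \<noteq> 3 \<longrightarrow> x0 k \<notin> \<rat>)"
proof (intro conjI ballI impI)
  fix x assume "x \<in> {-1<..<(15 * real k - 4) / 8}"
  then show "fk k x = Vol (dual_trunc (sigma0 k) (vector [x, 1, 0]))"
    by (simp add: fk_eq_Vol_dual_trunc_sigma0)
next
  show "x0 k \<in> {-1..(15 * real k - 4) / 8}"
    using x0_bounds[OF assms] by simp
next
  fix x assume x: "x \<in> {-1..(15 * real k - 4) / 8}"
  show "(fk k has_real_derivative 0) (at x) \<longleftrightarrow> x = x0 k"
  proof (cases "x = -1 \<or> x = (15 * real k - 4) / 8")
    case True
    then have "\<not> (fk k has_real_derivative 0) (at x)"
      using fk_not_isCont_at_poles DERIV_isCont by blast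
    moreover have "x \<noteq> x0 k"
      using True x0_bounds[OF assms] by auto
    ultimately show ?thesis
      by simp
  next
    case False
    with x have inside: "-1 < x" "x < (15 * real k - 4) / 8"
      by auto
    then have "(fk k has_real_derivative 0) (at x) \<longleftrightarrow>
        4 / 15 * ((x + 1) * crit_poly (real k) x) / ((x + 1)^2 * (15 * real k - 8 * x - 4))^2 = 0"
      using has_real_derivative_fk DERIV_unique by metis
    also have "\<dots> \<longleftrightarrow> crit_poly (real k) x = 0"
      using inside by simp
    also have "\<dots> \<longleftrightarrow> x = x0 k"
      using crit_poly_eq_0_iff[OF assms inside(1)] .
    finally show ?thesis .
  qed
next
  assume "k \<noteq> 3"
  then show "x0 k \<notin> \<rat>"
    using x0_not_Rats assms by simp
qed

end
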